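(* Let $E,F$ be Banach spaces over $\mathbb{K}$ and $m\in\mathbb{N}$. If the polynomial $P\in\mathcal{P}(^mE;F)$ has finite rank, then $\Delta^n_kP$ is of finite type for all $k,n\in\mathbb{N}$.
   Context: Banach spaces are over $\mathbb{K}=\mathbb{R}$ or $\mathbb{C}$. $\mathcal{P}(^jX;Y)$ is the space of continuous $j$-homogeneous polynomials $X\to Y$, $\mathcal{P}(^jX)=\mathcal{P}(^jX;\mathbb{K})$. For $P\in\mathcal{P}(^mE;F)$, $\Delta^n_kP\in\mathcal{P}(^n\mathcal{P}(^kF);\mathcal{P}(^{mnk}E))$ is defined by $\Delta^n_kP(q)(x)=q(P(x))^n$. A polynomial $Q\in\mathcal{P}(^jX;Y)$ has finite rank if the linear span of its range is finite dimensional; it is of finite type if it is a finite linear combination of polynomials of the form $x\mapsto\varphi(x)^jb$ with $\varphi\in X^*$, $b\in Y$. *)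

theory Defs
  imports "HOL-Analysis.Analysis" "HOL-Library.Function_Algebras"
begin

text \<open>Scalars: a type 'k of class real_normed_field + banach (by Gelfand-Mazur these are
  exactly R and C up to isometric isomorphism).  A Banach space over 'k is a real Banach
  space 'a (type class banach) together with a scalar multiplication s by 'k which makes
  it a 'k-vector space, extends the real scalar multiplication and is norm compatible.\<close>

definition kbanach :: "('k::{real_normed_field,banach} \<Rightarrow> 'a::banach \<Rightarrow> 'a) \<Rightarrow> bool" where
  "kbanach s \<longleftrightarrow> vector_space s
     \<and> (\<forall>r x. s (of_real r) x = scaleR r x)
     \<and> (\<forall>c x. norm (s c x) = norm c * norm x)"

text \<open>m-linear maps X^m \<rightarrow> Y, represented on sequences nat \<Rightarrow> X, depending only on the first
  m entries.\<close>

definition multilin :: "('k::field \<Rightarrow> 'a::ab_group_add \<Rightarrow> 'a) \<Rightarrow> ('k \<Rightarrow> 'b::ab_group_add \<Rightarrow> 'b) \<Rightarrow> nat \<Rightarrow> ((nat \<Rightarrow> 'a) \<Rightarrow> 'b) \<Rightarrow> bool" where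
  "multilin sX sY m A \<longleftrightarrow>
     (\<forall>i<m. \<forall>x. Vector_Spaces.linear sX sY (\<lambda>y. A (x(i := y))))
     \<and> (\<forall>x y. (\<forall>i<m. x i = y i) \<longrightarrow> A x = A y)"

definition hompoly :: "('k::field \<Rightarrow> 'a::{topological_space,ab_group_add} \<Rightarrow> 'a) \<Rightarrow> ('k \<Rightarrow> 'b::{topological_space,ab_group_add} \<Rightarrow> 'b) \<Rightarrow> nat \<Rightarrow> ('a \<Rightarrow> 'b) set" where
  "hompoly sX sY m = {P. continuous_on UNIV P \<and>
      (\<exists>A. multilin sX sY m A \<and> (\<forall>x. P x = A (\<lambda>_. x)))}"

definition polynorm :: "('a::real_normed_vector \<Rightarrow> 'b::real_normed_vector) \<Rightarrow> real" where
  "polynorm q = (SUP x\<in>cball 0 1. norm (q x))"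

definition fun_scale :: "('k \<Rightarrow> 'b \<Rightarrow> 'b) \<Rightarrow> 'k \<Rightarrow> ('a \<Rightarrow> 'b) \<Rightarrow> ('a \<Rightarrow> 'b)" where
  "fun_scale sY c f = (\<lambda>x. sY c (f x))"

text \<open>phi is an element of the (topological) dual of the normed space (X, sX, nX),
  where X is a subspace of an ambient vector space.\<close>

definition dual_on :: "'x set \<Rightarrow> ('k::real_normed_field \<Rightarrow> 'x::plus \<Rightarrow> 'x) \<Rightarrow> ('x \<Rightarrow> real) \<Rightarrow> ('x \<Rightarrow> 'k) \<Rightarrow> bool" where
  "dual_on X sX nX \<phi> \<longleftrightarrow>
     (\<forall>x\<in>X. \<forall>y\<in>X. \<phi> (x + y) = \<phi> x + \<phi> y)
     \<and> (\<forall>c. \<forall>x\<in>X. \<phi> (sX c x) = c * \<phi> x)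
     \<and> (\<exists>C. \<forall>x\<in>X. norm (\<phi> x) \<le> C * nX x)"

definition finite_type :: "'x set \<Rightarrow> ('k::real_normed_field \<Rightarrow> 'x::plus \<Rightarrow> 'x) \<Rightarrow> ('x \<Rightarrow> real)
     \<Rightarrow> ('k \<Rightarrow> 'y::comm_monoid_add \<Rightarrow> 'y) \<Rightarrow> 'y set \<Rightarrow> nat \<Rightarrow> ('x \<Rightarrow> 'y) \<Rightarrow> bool" where
  "finite_type X sX nX sY Y j Q \<longleftrightarrow>
     (\<exists>(r::nat) \<phi> b. (\<forall>i<r. dual_on X sX nX (\<phi> i) \<and> b i \<in> Y)
        \<and> (\<forall>x\<in>X. Q x = (\<Sum>i<r. sY ((\<phi> i x) ^ j) (b i))))"

definition finite_rank :: "('k::comm_ring_1 \<Rightarrow> 'b::ab_group_add \<Rightarrow> 'b) \<Rightarrow> ('a \<Rightarrow> 'b) \<Rightarrow> bool" where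
  "finite_rank sY P \<longleftrightarrow> (\<exists>B. finite B \<and> module.span sY (range P) \<subseteq> module.span sY B)"

definition Delta :: "nat \<Rightarrow> ('a \<Rightarrow> 'b) \<Rightarrow> ('b \<Rightarrow> 'k::power) \<Rightarrow> ('a \<Rightarrow> 'k)" where
  "Delta n P q = (\<lambda>x. (q (P x)) ^ n)"

end

theory Submission
  imports Defs
begin

text \<open>Fix k and n and put X = P(^k F). For x in E let T x be the function q \<mapsto> q(P x)^n on X.
  Since P has finite rank, P x ranges in the span of a finite set B, so by multilinearity
  q \<mapsto> q(P x) lies in the span of the finitely many functions q \<mapsto> A_q(b_1, ..., b_k) with b_i in B,
  where A_q is a multilinear form of q; hence all T x lie in one finite-dimensional space of
  functions on X. Such a family admits an interpolation formula T x = \<Sum>_i L_i(T x) T(x_i) with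
  finitely many points x_i and coefficient functionals L_i that are linear combinations of point
  evaluations. Evaluated at q this reads q(P x)^n = \<Sum>_i q(P x_i)^n L_i(T x): each q \<mapsto> q(P x_i) is a
  continuous linear functional on X, and x \<mapsto> L_i(T x), a linear combination of maps
  x \<mapsto> q_j(P x)^n, is an (m n k)-homogeneous polynomial on E.\<close>

section \<open>Multilinear maps and homogeneous polynomials\<close>

lemma multilin_add:
  assumes "multilin sX sY m A" "i < m"
  shows "A (x(i := a + b)) = A (x(i := a)) + A (x(i := b))"
  using assms unfolding multilin_def Vector_Spaces.linear_iff by blast

lemma multilin_scale:
  assumes "multilin sX sY m A" "i < m"
  shows "A (x(i := sX c a)) = sY c (A (x(i := a)))"
  using assms unfolding multilin_def Vector_Spaces.linear_iff by blast

lemma multilin_cong: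
  assumes "multilin sX sY m A" "\<And>i. i < m \<Longrightarrow> x i = y i"
  shows "A x = A y"
  using assms unfolding multilin_def by blast

lemma multilinI:
  assumes "vector_space sX" "vector_space sY"
    and "\<And>i x a b. i < m \<Longrightarrow> A (x(i := a + b)) = A (x(i := a)) + A (x(i := b))"
    and "\<And>i x c a. i < m \<Longrightarrow> A (x(i := sX c a)) = sY c (A (x(i := a)))"
    and "\<And>x y. (\<And>i. i < m \<Longrightarrow> x i = y i) \<Longrightarrow> A x = A y"
  shows "multilin sX sY m A"
  using assms unfolding multilin_def Vector_Spaces.linear_iff by blast

lemmas vector_space_mult = vector_space_over_itself.vector_space_axioms

lemma multilin_mult:
  fixes sX :: "'k::field \<Rightarrow> 'a::ab_group_add \<Rightarrow> 'a"
  assumes "vector_space sX" and A: "multilin sX (*) a A" and B: "multilin sX (*) b B"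
  shows "multilin sX (*) (a + b) (\<lambda>y. A y * B (\<lambda>j. y (a + j)))"
proof -
  define C where "C = (\<lambda>y. A y * B (\<lambda>j. y (a + j)))"
  have update_low: "C (x(i := w)) = A (x(i := w)) * B (\<lambda>j. x (a + j))" if "i < a" for x i w
    using that by (simp add: C_def)
  have update_high: "C (x(i := w)) = A x * B ((\<lambda>j. x (a + j))(i - a := w))" if "\<not> i < a" for x i w
  proof -
    have "(\<lambda>j. (x(i := w)) (a + j)) = (\<lambda>j. x (a + j))(i - a := w)"
      using that by (auto simp: fun_eq_iff)
    moreover have "A (x(i := w)) = A x"
      using that by (intro multilin_cong[OF A]) auto
    ultimately show ?thesis by (simp add: C_def)
  qed
  have "multilin sX (*) (a + b) C"
  proof (rule multilinI[OF assms(1) vector_space_mult])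
    fix i x u v assume "i < a + b"
    then show "C (x(i := u + v)) = C (x(i := u)) + C (x(i := v))"
      by (cases "i < a") (simp_all add: update_low update_high multilin_add[OF A]
          multilin_add[OF B] algebra_simps)
  next
    fix i x c u assume "i < a + b"
    then show "C (x(i := sX c u)) = c * C (x(i := u))"
      by (cases "i < a") (simp_all add: update_low update_high multilin_scale[OF A]
          multilin_scale[OF B])
  next
    fix x y :: "nat \<Rightarrow> 'a" assume "\<And>i. i < a + b \<Longrightarrow> x i = y i"
    then show "C x = C y"
      unfolding C_def
      by (auto intro!: arg_cong2[where f = "(*)"] multilin_cong[OF A] multilin_cong[OF B])
  qed
  then show ?thesis by (simp add: C_def)
qed

definition block_apply :: "nat \<Rightarrow> ((nat \<Rightarrow> 'a) \<Rightarrow> 'b) \<Rightarrow> (nat \<Rightarrow> 'a) \<Rightarrow> nat \<Rightarrow> 'b" where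
  "block_apply m A y i = A (\<lambda>l. y (i * m + l))"

lemma block_apply_const [simp]: "block_apply m A (\<lambda>_. x) = (\<lambda>_. A (\<lambda>_. x))"
  by (simp add: block_apply_def fun_eq_iff)

lemma block_apply_update:
  assumes A: "multilin sX sY m A"
  shows "block_apply m A (y(s := z))
       = (block_apply m A y)(s div m := A ((\<lambda>l. y (s div m * m + l))(s mod m := z)))"
proof
  fix i
  show "block_apply m A (y(s := z)) i
      = ((block_apply m A y)(s div m := A ((\<lambda>l. y (s div m * m + l))(s mod m := z)))) i"
  proof (cases "i = s div m")
    case True
    have "i * m + l = s \<longleftrightarrow> l = s mod m" for l
      using True div_mult_mod_eq[of s m] by (metis add_left_cancel)
    then show ?thesis using True by (auto simp: block_apply_def intro!: arg_cong[where f = A])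
  next
    case False
    have "i * m + l \<noteq> s" if "l < m" for l
      using False that by auto
    then show ?thesis using False by (auto simp: block_apply_def intro!: multilin_cong[OF A])
  qed
qed

lemma multilin_compose:
  fixes A :: "(nat \<Rightarrow> 'a::ab_group_add) \<Rightarrow> 'b::ab_group_add"
    and B :: "(nat \<Rightarrow> 'b) \<Rightarrow> 'c::ab_group_add"
  assumes "vector_space sX" "vector_space sZ"
    and B: "multilin sY sZ k B" and A: "multilin sX sY m A"
  shows "multilin sX sZ (k * m) (\<lambda>y. B (block_apply m A y))"
proof (rule multilinI[OF assms(1,2)])
  fix s assume s: "s < k * m"
  then have "m > 0" by (cases m) auto
  with s have "s div m < k" "s mod m < m"
    by (simp_all add: less_mult_imp_div_less)
  then show "B (block_apply m A (x(s := a + b)))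
      = B (block_apply m A (x(s := a))) + B (block_apply m A (x(s := b)))"
    and "B (block_apply m A (x(s := sX c a))) = sZ c (B (block_apply m A (x(s := a))))"
    for x :: "nat \<Rightarrow> 'a" and a b c
    by (simp_all add: block_apply_update[OF A] multilin_add[OF A] multilin_add[OF B]
        multilin_scale[OF A] multilin_scale[OF B])
next
  fix x y :: "nat \<Rightarrow> 'a" assume xy: "\<And>s. s < k * m \<Longrightarrow> x s = y s"
  have "i * m + l < k * m" if "i < k" "l < m" for i l
  proof -
    have "i * m + l < (i + 1) * m" using that by simp
    also have "\<dots> \<le> k * m" using that by (intro mult_right_mono) auto
    finally show ?thesis .
  qed
  then show "B (block_apply m A x) = B (block_apply m A y)"
    by (auto simp: block_apply_def xy intro!: multilin_cong[OF B] multilin_cong[OF A])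
qed

lemma hompolyI:
  assumes "multilin sX sY m A" "\<And>x. f x = A (\<lambda>_. x)" "continuous_on UNIV f"
  shows "f \<in> hompoly sX sY m"
  using assms unfolding hompoly_def by blast

interpretation fspace:
  vector_space "fun_scale ((*) :: 'k::field \<Rightarrow> 'k \<Rightarrow> 'k) :: 'k \<Rightarrow> ('a \<Rightarrow> 'k) \<Rightarrow> ('a \<Rightarrow> 'k)"
  by unfold_locales (simp_all add: fun_scale_def fun_eq_iff algebra_simps)

lemma hompoly_add:
  fixes sX :: "'k::real_normed_field \<Rightarrow> 'a::{topological_space,ab_group_add} \<Rightarrow> 'a"
  assumes "vector_space sX" "f \<in> hompoly sX (*) d" "g \<in> hompoly sX (*) d"
  shows "(\<lambda>x. f x + g x) \<in> hompoly sX (*) d"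
proof -
  obtain A where A: "multilin sX (*) d A" "\<And>x. f x = A (\<lambda>_. x)" "continuous_on UNIV f"
    using assms(2) unfolding hompoly_def by blast
  obtain B where B: "multilin sX (*) d B" "\<And>x. g x = B (\<lambda>_. x)" "continuous_on UNIV g"
    using assms(3) unfolding hompoly_def by blast
  have "multilin sX (*) d (\<lambda>y. A y + B y)"
    by (rule multilinI[OF assms(1) vector_space_mult])
      (auto simp: multilin_add[OF A(1)] multilin_add[OF B(1)] multilin_scale[OF A(1)]
        multilin_scale[OF B(1)] algebra_simps intro!: arg_cong2[where f = "(+)"]
        multilin_cong[OF A(1)] multilin_cong[OF B(1)])
  then show ?thesis
    by (rule hompolyI[OF _ _ continuous_on_add[OF A(3) B(3)]]) (simp add: A(2) B(2))
qed

lemma hompoly_cmult: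
  fixes sX :: "'k::real_normed_field \<Rightarrow> 'a::{topological_space,ab_group_add} \<Rightarrow> 'a"
  assumes "vector_space sX" "f \<in> hompoly sX (*) d"
  shows "(\<lambda>x. c * f x) \<in> hompoly sX (*) d"
proof -
  obtain A where A: "multilin sX (*) d A" "\<And>x. f x = A (\<lambda>_. x)" "continuous_on UNIV f"
    using assms(2) unfolding hompoly_def by blast
  have "multilin sX (*) d (\<lambda>y. c * A y)"
    by (rule multilinI[OF assms(1) vector_space_mult])
      (auto simp: multilin_add[OF A(1)] multilin_scale[OF A(1)] algebra_simps
        intro!: arg_cong2[where f = "(*)"] multilin_cong[OF A(1)])
  then show ?thesis
    by (rule hompolyI[OF _ _ continuous_on_mult[OF continuous_on_const A(3)]]) (simp add: A(2))
qed

lemma subspace_hompoly: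
  fixes sX :: "'k::real_normed_field \<Rightarrow> 'a::{topological_space,ab_group_add} \<Rightarrow> 'a"
  assumes "vector_space sX"
  shows "fspace.subspace (hompoly sX (*) d)"
proof (rule fspace.subspaceI)
  have "multilin sX (*) d (\<lambda>_. 0)"
    by (rule multilinI[OF assms vector_space_mult]) simp_all
  then show "0 \<in> hompoly sX (*) d"
    by (rule hompolyI) auto
  show "f + g \<in> hompoly sX (*) d" if "f \<in> hompoly sX (*) d" "g \<in> hompoly sX (*) d" for f g
    using hompoly_add[OF assms that] by (simp add: plus_fun_def)
  show "fun_scale (*) c f \<in> hompoly sX (*) d" if "f \<in> hompoly sX (*) d" for c f
    using hompoly_cmult[OF assms that] by (simp add: fun_scale_def)
qed

lemma hompoly_const:
  assumes "vector_space sX"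
  shows "(\<lambda>_. c) \<in> hompoly sX ((*) :: 'k::real_normed_field \<Rightarrow> _) 0"
proof -
  have "multilin sX ((*) :: 'k \<Rightarrow> _) 0 (\<lambda>_. c)"
    by (rule multilinI[OF assms vector_space_mult]) simp_all
  then show ?thesis by (rule hompolyI) auto
qed

lemma hompoly_mult:
  fixes sX :: "'k::real_normed_field \<Rightarrow> 'a::{topological_space,ab_group_add} \<Rightarrow> 'a"
  assumes "vector_space sX" "f \<in> hompoly sX (*) a" "g \<in> hompoly sX (*) b"
  shows "(\<lambda>x. f x * g x) \<in> hompoly sX (*) (a + b)"
proof -
  obtain A where A: "multilin sX (*) a A" "\<And>x. f x = A (\<lambda>_. x)" "continuous_on UNIV f"
    using assms(2) unfolding hompoly_def by blast
  obtain B where B: "multilin sX (*) b B" "\<And>x. g x = B (\<lambda>_. x)" "continuous_on UNIV g"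
    using assms(3) unfolding hompoly_def by blast
  show ?thesis
    by (rule hompolyI[OF multilin_mult[OF assms(1) A(1) B(1)] _ continuous_on_mult[OF A(3) B(3)]])
      (simp add: A(2) B(2))
qed

lemma hompoly_power:
  fixes sX :: "'k::real_normed_field \<Rightarrow> 'a::{topological_space,ab_group_add} \<Rightarrow> 'a"
  assumes "vector_space sX" "f \<in> hompoly sX (*) a"
  shows "(\<lambda>x. f x ^ n) \<in> hompoly sX (*) (a * n)"
proof (induction n)
  case 0
  show ?case using hompoly_const[OF assms(1), of 1] by simp
next
  case (Suc n)
  show ?case using hompoly_mult[OF assms Suc] by (simp add: algebra_simps)
qed

lemma hompoly_compose:
  fixes sE :: "'k::real_normed_field \<Rightarrow> 'e::{topological_space,ab_group_add} \<Rightarrow> 'e"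
    and sF :: "'k \<Rightarrow> 'f::{topological_space,ab_group_add} \<Rightarrow> 'f"
  assumes "vector_space sE" "P \<in> hompoly sE sF m" "q \<in> hompoly sF (*) k"
  shows "(\<lambda>x. q (P x)) \<in> hompoly sE (*) (k * m)"
proof -
  obtain A where A: "multilin sE sF m A" "\<And>x. P x = A (\<lambda>_. x)" "continuous_on UNIV P"
    using assms(2) unfolding hompoly_def by blast
  obtain B where B: "multilin sF (*) k B" "\<And>x. q x = B (\<lambda>_. x)" "continuous_on UNIV q"
    using assms(3) unfolding hompoly_def by blast
  have "continuous_on UNIV (\<lambda>x. q (P x))"
    using continuous_on_compose[OF A(3) continuous_on_subset[OF B(3)]] by (simp add: o_def)
  then show ?thesis
    by (intro hompolyI[OF multilin_compose[OF assms(1) vector_space_mult B(1) A(1)]])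
      (simp_all add: A(2) B(2))
qed

lemma hompoly_homogeneous:
  assumes "q \<in> hompoly sF ((*) :: 'k::real_normed_field \<Rightarrow> _) k"
  shows "q (sF c u) = c ^ k * q u"
proof -
  obtain A where A: "multilin sF (*) k A" "\<And>x. q x = A (\<lambda>_. x)"
    using assms unfolding hompoly_def by blast
  have "A (\<lambda>i. if i < j then sF c u else u) = c ^ j * A (\<lambda>_. u)" if "j \<le> k" for j
    using that
  proof (induction j)
    case 0
    then show ?case by simp
  next
    case (Suc j)
    have "(\<lambda>i. if i < Suc j then sF c u else u) = (\<lambda>i. if i < j then sF c u else u)(j := sF c u)"
      and "(\<lambda>i. if i < j then sF c u else u)(j := u) = (\<lambda>i. if i < j then sF c u else u)"
      by (auto simp: fun_eq_iff)
    then show ?case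
      using Suc multilin_scale[OF A(1), of j "\<lambda>i. if i < j then sF c u else u" c u] by simp
  qed
  moreover have "A (\<lambda>i. if i < k then sF c u else u) = A (\<lambda>_. sF c u)"
    by (rule multilin_cong[OF A(1)]) simp
  ultimately show ?thesis using A(2) by simp
qed

context
  fixes sF :: "'k::real_normed_field \<Rightarrow> 'f::real_normed_vector \<Rightarrow> 'f"
  assumes scale_of_real: "\<And>r x. sF (of_real r) x = r *\<^sub>R x"
begin

lemma hompoly_scaleR:
  assumes "q \<in> hompoly sF (*) k"
  shows "q (r *\<^sub>R u) = of_real r ^ k * q u"
  using hompoly_homogeneous[OF assms, of "of_real r" u] by (simp add: scale_of_real)

lemma hompoly_bounded_on_unit_ball:
  assumes q: "q \<in> hompoly sF (*) k"
  shows "bdd_above ((\<lambda>x. norm (q x)) ` cball 0 1)"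
proof -
  have "isCont q 0"
    using q unfolding hompoly_def by (simp add: continuous_on_eq_continuous_at)
  then obtain d where d: "d > 0" "\<And>y. norm y < d \<Longrightarrow> norm (q y - q 0) < 1"
    unfolding continuous_at_eps_delta dist_norm by (metis diff_zero zero_less_one)
  define t where "t = d / 2"
  have t: "t > 0" using d(1) by (simp add: t_def)
  have "norm (q x) \<le> (norm (q 0) + 1) / t ^ k" if "norm x \<le> 1" for x
  proof -
    have "norm (t *\<^sub>R x) < d"
      using that d(1) t by (simp add: t_def mult_le_cancel_left1)
    then have "norm (q (t *\<^sub>R x)) < norm (q 0) + 1"
      using d(2) norm_triangle_sub[of "q (t *\<^sub>R x)" "q 0"] by fastforce
    then have "t ^ k * norm (q x) < norm (q 0) + 1"
      by (simp add: hompoly_scaleR[OF q] norm_mult norm_power t less_imp_le)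
    then show ?thesis using t by (simp add: field_simps)
  qed
  then show ?thesis by (intro bdd_aboveI2) simp
qed

lemma norm_hompoly_le_polynorm:
  assumes q: "q \<in> hompoly sF (*) k"
  shows "norm (q u) \<le> norm u ^ k * polynorm q"
proof -
  \<comment> \<open>for u = 0 this is v = 0, as 1 / 0 = 0, so no case distinction is needed\<close>
  define v where "v = (1 / norm u) *\<^sub>R u"
  have "norm v \<le> 1" and u: "u = norm u *\<^sub>R v"
    by (auto simp: v_def)
  have "norm (q u) = norm u ^ k * norm (q v)"
    by (subst u, subst hompoly_scaleR[OF q]) (simp add: norm_mult norm_power)
  also have "\<dots> \<le> norm u ^ k * polynorm q"
    unfolding polynorm_def using \<open>norm v \<le> 1\<close>
    by (intro mult_left_mono cSUP_upper hompoly_bounded_on_unit_ball[OF q]) auto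
  finally show ?thesis .
qed

lemma dual_on_evaluation:
  "dual_on (hompoly sF (*) k) (fun_scale (*)) polynorm (\<lambda>q. q u)"
  unfolding dual_on_def using norm_hompoly_le_polynorm by (auto simp: fun_scale_def)

end

section \<open>Spans of scalar functions\<close>

abbreviation point_eval_span :: "(('a \<Rightarrow> 'k::field) \<Rightarrow> 'k) set" where
  "point_eval_span \<equiv> fspace.span (range (\<lambda>p f. f p))"

lemma fspace_span_zero [simp]: "(\<lambda>_. 0) \<in> fspace.span S"
  using fspace.span_zero[of S] by (simp add: zero_fun_def)

lemma point_eval_in_span: "(\<lambda>f. f p) \<in> point_eval_span"
  by (rule fspace.span_base) (rule rangeI)

lemma point_eval_span_comp:
  fixes F :: "'x \<Rightarrow> 'p \<Rightarrow> 'k::field"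
  assumes "L \<in> point_eval_span" "fspace.subspace V" "\<And>p. (\<lambda>x. F x p) \<in> V"
  shows "(\<lambda>x. L (F x)) \<in> V"
  using assms(1)
proof (induction rule: fspace.span_induct_alt)
  case base
  show ?case using fspace.subspace_0[OF assms(2)] by (simp add: zero_fun_def)
next
  case (step c e L)
  then obtain p where "e = (\<lambda>f. f p)" by blast
  then have "(\<lambda>x. (fun_scale (*) c e + L) (F x))
      = fun_scale (*) c (\<lambda>x. F x p) + (\<lambda>x. L (F x))"
    by (simp add: fun_scale_def fun_eq_iff)
  then show ?case
    using step(2) assms(2,3) by (simp add: fspace.subspace_add fspace.subspace_scale)
qed

lemma span_mult:
  fixes S T :: "('a \<Rightarrow> 'k::field) set"
  assumes f: "f \<in> fspace.span S" and g: "g \<in> fspace.span T"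
  shows "(\<lambda>x. f x * g x) \<in> fspace.span {\<lambda>x. a x * b x |a b. a \<in> S \<and> b \<in> T}"
    (is "_ \<in> fspace.span ?M")
proof -
  have left: "(\<lambda>x. a x * g x) \<in> fspace.span ?M" if a: "a \<in> S" for a
    using g
  proof (induction rule: fspace.span_induct_alt)
    case base
    show ?case by simp
  next
    case (step c b h)
    have "(\<lambda>x. a x * (fun_scale (*) c b + h) x)
        = fun_scale (*) c (\<lambda>x. a x * b x) + (\<lambda>x. a x * h x)"
      by (simp add: fun_scale_def fun_eq_iff algebra_simps)
    moreover have "(\<lambda>x. a x * b x) \<in> ?M" using a step(1) by blast
    ultimately show ?case
      using step(2) by (simp add: fspace.span_add fspace.span_scale fspace.span_base)
  qed
  from f show ?thesis
  proof (induction rule: fspace.span_induct_alt)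
    case base
    show ?case by simp
  next
    case (step c a h)
    have "(\<lambda>x. (fun_scale (*) c a + h) x * g x)
        = fun_scale (*) c (\<lambda>x. a x * g x) + (\<lambda>x. h x * g x)"
      by (simp add: fun_scale_def fun_eq_iff algebra_simps)
    then show ?case
      using step left by (simp add: fspace.span_add fspace.span_scale)
  qed
qed

lemma finite_span_powers:
  fixes S :: "('a \<Rightarrow> 'k::field) set"
  assumes "finite S"
  shows "\<exists>T. finite T \<and> (\<forall>f \<in> fspace.span S. (\<lambda>x. f x ^ n) \<in> fspace.span T)"
proof (induction n)
  case 0
  have "(\<lambda>x. f x ^ 0) \<in> fspace.span {\<lambda>_. 1}" for f :: "'a \<Rightarrow> 'k"
    by (simp add: fspace.span_base)
  then show ?case by blast
next
  case (Suc n)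
  then obtain T where T: "finite T" "\<forall>f \<in> fspace.span S. (\<lambda>x. f x ^ n) \<in> fspace.span T"
    by blast
  have "finite {\<lambda>x. a x * b x |a b. a \<in> S \<and> b \<in> T}"
    using finite_image_set2[of "\<lambda>a. a \<in> S" "\<lambda>b. b \<in> T" "\<lambda>a b x. a x * b x"] assms T(1)
    by simp
  moreover have "(\<lambda>x. f x ^ Suc n) \<in> fspace.span {\<lambda>x. a x * b x |a b. a \<in> S \<and> b \<in> T}"
    if "f \<in> fspace.span S" for f
    using span_mult[OF that bspec[OF T(2) that]] by simp
  ultimately show ?case by blast
qed

lemma (in vector_space) span_exchange:
  assumes "finite S" "g \<in> span S" "g \<noteq> 0"
  shows "\<exists>b\<in>S. S \<subseteq> span (insert g (S - {b}))"
  using assms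
proof (induction S rule: finite_induct)
  case empty
  then show ?case by simp
next
  case (insert s S)
  show ?case
  proof (cases "g \<in> span S")
    case True
    then obtain b where b: "b \<in> S" "S \<subseteq> span (insert g (S - {b}))"
      using insert by blast
    have "span (insert g (S - {b})) \<subseteq> span (insert g (insert s S - {b}))"
      by (rule span_mono) auto
    moreover have "s \<in> span (insert g (insert s S - {b}))"
      using b insert(2) by (intro span_base) auto
    ultimately show ?thesis using b by (intro bexI[of _ b]) auto
  next
    case False
    have "s \<in> span (insert g S)"
      by (rule in_span_insert[OF insert(4) False])
    moreover have "insert s S - {s} = S"
      using insert(2) by auto
    ultimately show ?thesis
      using span_superset[of "insert g S"] by (intro bexI[of _ s]) auto
  qed
qed

section \<open>Interpolation by point evaluations\<close>

definition project_along :: "('a \<Rightarrow> 'k::field) \<Rightarrow> 'a \<Rightarrow> ('a \<Rightarrow> 'k) \<Rightarrow> 'a \<Rightarrow> 'k" where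
  "project_along g p f = (\<lambda>x. f x - f p / g p * g x)"

lemma span_project_along:
  assumes "g p \<noteq> 0" "h \<in> fspace.span (insert g T)"
  shows "project_along g p h \<in> fspace.span (project_along g p ` T)"
  using assms(2)
proof (induction rule: fspace.span_induct_alt)
  case base
  show ?case by (simp add: project_along_def)
next
  case (step c e h)
  have "project_along g p e \<in> fspace.span (project_along g p ` T)"
  proof (cases "e = g")
    case True
    then show ?thesis using assms(1) by (simp add: project_along_def)
  next
    case False
    then show ?thesis using step(1) by (simp add: fspace.span_base)
  qed
  moreover have "project_along g p (fun_scale (*) c e + h)
      = fun_scale (*) c (project_along g p e) + project_along g p h"
    by (simp add: project_along_def fun_scale_def fun_eq_iff algebra_simps add_divide_distrib)
  ultimately show ?case
    using step(2) by (simp only: fspace.span_add fspace.span_scale)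
qed

lemma project_along_point_eval: "(\<lambda>f. project_along g p f x) \<in> point_eval_span"
proof -
  have "(\<lambda>f. project_along g p f x) = (\<lambda>f. f x) - fun_scale (*) (g x / g p) (\<lambda>f. f p)"
    by (simp add: project_along_def fun_scale_def fun_eq_iff)
  then show ?thesis
    by (simp add: fspace.span_diff fspace.span_scale point_eval_in_span)
qed

lemma sum_fun_apply: "(\<Sum>i\<in>A. F i) x = (\<Sum>i\<in>A. F i x)"
  by (induction A rule: infinite_finite_induct) auto

lemma project_along_sum_eq:
  assumes "g p \<noteq> 0"
    and "project_along g p f x = (\<Sum>i<r. a i * project_along g p (h i) x)"
  shows "f x = (\<Sum>i<r. a i * h i x) + (f p - (\<Sum>i<r. a i * h i p)) / g p * g x"
proof -
  have "f x - f p / g p * g x = (\<Sum>i<r. a i * (h i x - h i p / g p * g x))"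
    using assms(2) by (simp add: project_along_def)
  also have "\<dots> = (\<Sum>i<r. a i * h i x) - (\<Sum>i<r. a i * h i p) / g p * g x"
    by (simp add: right_diff_distrib sum_subtractf sum_distrib_left sum_distrib_right
        sum_divide_distrib mult_ac)
  finally show ?thesis
    using assms(1) by (simp add: diff_divide_distrib algebra_simps)
qed

lemma point_eval_span_comp_project_along:
  assumes "L \<in> point_eval_span"
  shows "(\<lambda>f. L (project_along g p f)) \<in> point_eval_span"
  using assms by (rule point_eval_span_comp[OF _ fspace.subspace_span project_along_point_eval])

lemma point_eval_span_correction:
  assumes "\<And>j. j < r \<Longrightarrow> M j \<in> point_eval_span"
  shows "(\<lambda>f. (f p - (\<Sum>j<r. M j f * c j)) / d) \<in> point_eval_span"
proof -
  have "(\<lambda>f. (f p - (\<Sum>j<r. M j f * c j)) / d)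
      = fun_scale (*) (1 / d) ((\<lambda>f. f p) - (\<Sum>j<r. fun_scale (*) (c j) (M j)))"
    by (simp add: fun_scale_def fun_eq_iff sum_fun_apply algebra_simps diff_divide_distrib)
  also have "\<dots> \<in> point_eval_span"
    using assms
    by (intro fspace.span_scale fspace.span_diff fspace.span_sum point_eval_in_span) simp_all
  finally show ?thesis .
qed

lemma preimage_choice:
  assumes "\<forall>i<r. g i \<in> f ` A"
  shows "\<exists>h. \<forall>i<r. h i \<in> A \<and> g i = f (h i)"
proof -
  define h where "h i = (SOME a. a \<in> A \<and> g i = f a)" for i
  have "h i \<in> A \<and> g i = f (h i)" if "i < r" for i
  proof -
    have "\<exists>a. a \<in> A \<and> g i = f a"
      using assms that by blast
    then show ?thesis
      unfolding h_def by (rule someI_ex)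
  qed
  then show ?thesis by blast
qed

text \<open>Induction on the size of the spanning set: for g0 in G and p0 with g0 p0 \<noteq> 0, projecting
  along g0 onto the functions vanishing at p0 maps G into the span of one function fewer
  (exchange lemma); an interpolation of the projected family then extends by the node g0,
  whose coefficient is read off at p0.\<close>

lemma interpolation_by_point_evals:
  fixes S G :: "('a \<Rightarrow> 'k::field) set"
  assumes "finite S" "G \<subseteq> fspace.span S"
  shows "\<exists>(r::nat) g L. (\<forall>i<r. g i \<in> G \<and> L i \<in> point_eval_span)
            \<and> (\<forall>f\<in>G. \<forall>x. f x = (\<Sum>i<r. L i f * g i x))"
  using assms
proof (induction "card S" arbitrary: S G rule: less_induct)
  case less
  show ?case
  proof (cases "G \<subseteq> {0}")
    case True
    then show ?thesis by (intro exI[of _ "0::nat"]) auto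
  next
    case False
    then obtain g0 where "g0 \<in> G" "g0 \<noteq> 0" by blast
    moreover from this(2) obtain p0 where "g0 p0 \<noteq> 0" by (auto simp: fun_eq_iff)
    ultimately have g0: "g0 \<in> G" "g0 p0 \<noteq> 0" and "g0 \<noteq> 0" by auto
    then obtain b where b: "b \<in> S" "S \<subseteq> fspace.span (insert g0 (S - {b}))"
      using fspace.span_exchange[OF less(2)] less(3) g0(1) by blast
    define \<pi> where "\<pi> = project_along g0 p0"
    have "fspace.span S \<subseteq> fspace.span (insert g0 (S - {b}))"
      by (rule fspace.span_minimal[OF b(2) fspace.subspace_span])
    then have sub: "\<pi> ` G \<subseteq> fspace.span (\<pi> ` (S - {b}))"
      using less(3) span_project_along[of g0 p0, OF g0(2)] unfolding \<pi>_def by blast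
    have card_less: "card (\<pi> ` (S - {b})) < card S"
      using card_image_le[of "S - {b}" \<pi>] card_Diff1_less[OF less(2) b(1)] less(2) by simp
    have fin: "finite (\<pi> ` (S - {b}))"
      using less(2) by simp
    obtain r :: nat and g' L' where IH: "\<forall>i<r. g' i \<in> \<pi> ` G \<and> L' i \<in> point_eval_span"
        "\<forall>f\<in>\<pi> ` G. \<forall>x. f x = (\<Sum>i<r. L' i f * g' i x)"
      using less(1)[OF card_less fin sub] by (elim exE conjE) (rule that)
    have "\<forall>i<r. g' i \<in> \<pi> ` G"
      using IH(1) by blast
    then obtain h where h: "\<forall>i<r. h i \<in> G \<and> g' i = \<pi> (h i)"
      by (elim preimage_choice[THEN exE])
    define g where "g i = (if i < r then h i else g0)" for i
    define L where "L i = (if i < r then (\<lambda>f. L' i (\<pi> f))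
        else (\<lambda>f. (f p0 - (\<Sum>j<r. L' j (\<pi> f) * h j p0)) / g0 p0))" for i
    have "g i \<in> G \<and> L i \<in> point_eval_span" if "i < Suc r" for i
      using that h g0(1) IH(1) unfolding g_def L_def \<pi>_def
      by (auto intro!: point_eval_span_comp_project_along point_eval_span_correction)
    moreover have "f x = (\<Sum>i<Suc r. L i f * g i x)" if "f \<in> G" for f x
    proof -
      have "\<pi> f x = (\<Sum>i<r. L' i (\<pi> f) * \<pi> (h i) x)"
        using IH(2) h that by auto
      then have "f x = (\<Sum>i<r. L' i (\<pi> f) * h i x)
          + (f p0 - (\<Sum>i<r. L' i (\<pi> f) * h i p0)) / g0 p0 * g0 x"
        unfolding \<pi>_def by (rule project_along_sum_eq[of g0 p0 f x, OF g0(2)])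
      then show ?thesis
        by (simp add: L_def g_def)
    qed
    ultimately show ?thesis by blast
  qed
qed

lemma finite_span_family_interpolation:
  fixes T :: "'x \<Rightarrow> 'a \<Rightarrow> 'k::field"
  assumes "finite S" "range T \<subseteq> fspace.span S"
  shows "\<exists>(r::nat) xs L. (\<forall>i<r. L i \<in> point_eval_span)
           \<and> (\<forall>x q. T x q = (\<Sum>i<r. L i (T x) * T (xs i) q))"
proof -
  obtain r :: nat and g L where gL: "\<forall>i<r. g i \<in> range T \<and> L i \<in> point_eval_span"
    and interpolation: "\<forall>f\<in>range T. \<forall>q. f q = (\<Sum>i<r. L i f * g i q)"
    using interpolation_by_point_evals[OF assms] by (elim exE conjE) (rule that)
  have "\<forall>i<r. g i \<in> T ` UNIV"
    using gL by blast
  then obtain xs where xs: "\<forall>i<r. xs i \<in> UNIV \<and> g i = T (xs i)"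
    by (elim preimage_choice[THEN exE])
  show ?thesis
  proof (intro exI[of _ r] exI[of _ xs] exI[of _ L] conjI allI impI)
    show "L i \<in> point_eval_span" if "i < r" for i
      using gL that by blast
    fix x q
    have "T x q = (\<Sum>i<r. L i (T x) * g i q)"
      by (rule interpolation[rule_format, of "T x" q]) simp
    then show "T x q = (\<Sum>i<r. L i (T x) * T (xs i) q)"
      using xs by simp
  qed
qed

section \<open>Evaluation functionals on P(^k F)\<close>

lemma multilin_in_span_of_values:
  assumes "vector_space sX" "vector_space sY" and A: "multilin sX sY k A"
    and "\<And>i. i < k \<Longrightarrow> y i \<in> module.span sX B"
  shows "A y \<in> module.span sY (A ` PiE {..<k} (\<lambda>_. B))"
proof -
  interpret X: vector_space sX by fact
  interpret Y: vector_space sY by fact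
  let ?V = "Y.span (A ` PiE {..<k} (\<lambda>_. B))"
  have "A y \<in> ?V"
    if "j \<le> k" "\<And>i. i < j \<Longrightarrow> y i \<in> X.span B"
      "\<And>i. j \<le> i \<Longrightarrow> i < k \<Longrightarrow> y i \<in> B" for j y
    using that
  proof (induction j arbitrary: y)
    case 0
    have "A y = A (restrict y {..<k})"
      by (rule multilin_cong[OF A]) simp
    moreover have "restrict y {..<k} \<in> PiE {..<k} (\<lambda>_. B)"
      using 0 by auto
    ultimately show ?case by (simp add: Y.span_base)
  next
    case (Suc j)
    then have j: "j < k" by simp
    have "A (y(j := a)) \<in> ?V" if "a \<in> X.span B" for a
      using that
    proof (induction rule: X.span_induct_alt)
      case base
      have "A (y(j := 0)) = 0"
        using multilin_scale[OF A j, of y 0 0] by simp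
      then show ?case by (metis Y.span_zero)
    next
      case (step c a z)
      have "A (y(j := a)) \<in> ?V"
        using Suc step(1) by (intro Suc.IH) auto
      moreover have "A (y(j := sX c a + z)) = sY c (A (y(j := a))) + A (y(j := z))"
        by (simp only: multilin_add[OF A j] multilin_scale[OF A j])
      ultimately show ?case
        using step(2) by (metis Y.span_add Y.span_scale)
    qed
    from this[of "y j"] show ?case using Suc.prems by simp
  qed
  from this[OF order_refl assms(4)] show ?thesis by simp
qed

lemma multilin_pointwise:
  fixes A :: "'q \<Rightarrow> (nat \<Rightarrow> 'a::ab_group_add) \<Rightarrow> 'k::field"
  assumes "vector_space sX" and A: "\<And>q. q \<in> Q \<Longrightarrow> multilin sX (*) k (A q)"
  shows "multilin sX (fun_scale (*)) k (\<lambda>y q. if q \<in> Q then A q y else 0)"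
proof (rule multilinI[OF assms(1) fspace.vector_space_axioms])
  fix i x a b assume "i < k"
  then show "(\<lambda>q. if q \<in> Q then A q (x(i := a + b)) else 0)
      = (\<lambda>q. if q \<in> Q then A q (x(i := a)) else 0) + (\<lambda>q. if q \<in> Q then A q (x(i := b)) else 0)"
    by (simp add: fun_eq_iff multilin_add[OF A])
next
  fix i x c a assume "i < k"
  then show "(\<lambda>q. if q \<in> Q then A q (x(i := sX c a)) else 0)
      = fun_scale (*) c (\<lambda>q. if q \<in> Q then A q (x(i := a)) else 0)"
    by (simp add: fun_eq_iff fun_scale_def multilin_scale[OF A])
next
  fix x y :: "nat \<Rightarrow> 'a" assume "\<And>i. i < k \<Longrightarrow> x i = y i"
  then have "A q x = A q y" if "q \<in> Q" for q
    using multilin_cong[OF A[OF that]] by blast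
  then show "(\<lambda>q. if q \<in> Q then A q x else 0) = (\<lambda>q. if q \<in> Q then A q y else 0)"
    by (simp add: fun_eq_iff)
qed

text \<open>Evaluation at u is extended by 0 outside P(^k F): this makes it an element of the function
  space ('f \<Rightarrow> 'k) \<Rightarrow> 'k, and only the q in P(^k F) need a multilinear form.\<close>

lemma restricted_evaluation_finite_span:
  fixes sF :: "'k::real_normed_field \<Rightarrow> 'f::{topological_space,ab_group_add} \<Rightarrow> 'f"
  assumes "vector_space sF" "finite B"
  shows "\<exists>S. finite S \<and> (\<forall>u \<in> module.span sF B.
           (\<lambda>q. if q \<in> hompoly sF (*) k then q u else 0) \<in> fspace.span S)"
proof -
  let ?X = "hompoly sF ((*) :: 'k \<Rightarrow> _) k"
  define A where "A q = (SOME A. multilin sF (*) k A \<and> (\<forall>x. q x = A (\<lambda>_. x)))" for q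
  have A_spec: "multilin sF (*) k (A q) \<and> (\<forall>x. q x = A q (\<lambda>_. x))" if "q \<in> ?X" for q
  proof -
    have "\<exists>A. multilin sF (*) k A \<and> (\<forall>x. q x = A (\<lambda>_. x))"
      using that unfolding hompoly_def by blast
    then show ?thesis
      unfolding A_def by (rule someI_ex)
  qed
  have A: "multilin sF (*) k (A q)" if "q \<in> ?X" for q
    using A_spec[OF that] by blast
  have A_eval: "A q (\<lambda>_. x) = q x" if "q \<in> ?X" for q x
    using A_spec[OF that] by simp
  define E where "E = (\<lambda>y q. if q \<in> ?X then A q y else 0)"
  have E: "multilin sF (fun_scale (*)) k E"
    unfolding E_def by (rule multilin_pointwise[OF assms(1) A])
  have E_const: "E (\<lambda>_. u) = (\<lambda>q. if q \<in> ?X then q u else 0)" for u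
    by (simp add: E_def A_eval fun_eq_iff)
  have "(\<lambda>q. if q \<in> ?X then q u else 0) \<in> fspace.span (E ` PiE {..<k} (\<lambda>_. B))"
    if "u \<in> module.span sF B" for u
    unfolding E_const[symmetric] using that
    by (intro multilin_in_span_of_values[OF assms(1) fspace.vector_space_axioms E])
  moreover have "finite (E ` PiE {..<k} (\<lambda>_. B))"
    using assms(2) by (intro finite_imageI finite_PiE) auto
  ultimately show ?thesis
    by (intro exI[of _ "E ` PiE {..<k} (\<lambda>_. B)"] conjI ballI)
qed

lemma finite_rank_evaluation_powers_finite_span:
  fixes sF :: "'k::real_normed_field \<Rightarrow> 'f::{topological_space,ab_group_add} \<Rightarrow> 'f"
  assumes "vector_space sF" "finite_rank sF P"
  shows "\<exists>S. finite S \<and>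
    range (\<lambda>x q. (if q \<in> hompoly sF (*) k then q (P x) else 0) ^ n) \<subseteq> fspace.span S"
proof -
  interpret F: vector_space sF by fact
  obtain B where "finite B" and B: "F.span (range P) \<subseteq> F.span B"
    using assms(2) unfolding finite_rank_def by blast
  have P: "P x \<in> F.span B" for x
    using B F.span_base[of "P x" "range P"] by blast
  obtain S1 where "finite S1"
    and S1: "\<forall>u\<in>F.span B. (\<lambda>q. if q \<in> hompoly sF (*) k then q u else 0) \<in> fspace.span S1"
    using restricted_evaluation_finite_span[OF assms(1) \<open>finite B\<close>, where k = k]
    by (elim exE conjE) (rule that)
  obtain S where "finite S" and S: "\<forall>f\<in>fspace.span S1. (\<lambda>q. f q ^ n) \<in> fspace.span S"
    using finite_span_powers[OF \<open>finite S1\<close>, where n = n] by (elim exE conjE) (rule that)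
  have "(\<lambda>q. (if q \<in> hompoly sF (*) k then q (P x) else 0) ^ n) \<in> fspace.span S" for x
    using bspec[OF S bspec[OF S1 P]] by simp
  with \<open>finite S\<close> show ?thesis
    by (intro exI[of _ S] conjI image_subsetI)
qed

lemma hompoly_restricted_evaluation_power:
  fixes sE :: "'k::real_normed_field \<Rightarrow> 'e::{topological_space,ab_group_add} \<Rightarrow> 'e"
    and sF :: "'k \<Rightarrow> 'f::{topological_space,ab_group_add} \<Rightarrow> 'f"
  assumes "vector_space sE" "P \<in> hompoly sE sF m"
  shows "(\<lambda>x. (if q \<in> hompoly sF (*) k then q (P x) else 0) ^ n) \<in> hompoly sE (*) (m * n * k)"
proof -
  have "(\<lambda>x. if q \<in> hompoly sF (*) k then q (P x) else 0) \<in> hompoly sE (*) (k * m)"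
  proof (cases "q \<in> hompoly sF (*) k")
    case True
    then show ?thesis using hompoly_compose[OF assms True] by simp
  next
    case False
    then have "(\<lambda>x. if q \<in> hompoly sF (*) k then q (P x) else 0) = 0"
      by (simp add: fun_eq_iff)
    then show ?thesis
      using fspace.subspace_0[OF subspace_hompoly[OF assms(1)]] by (simp only:)
  qed
  from hompoly_power[OF assms(1) this, of n] show ?thesis
    by (simp add: mult_ac)
qed

lemma kbanach_vector_space: "kbanach s \<Longrightarrow> vector_space s"
  unfolding kbanach_def by blast

lemma kbanach_scale_of_real: "kbanach s \<Longrightarrow> s (of_real r) x = r *\<^sub>R x"
  unfolding kbanach_def by blast

theorem mainTheorem12:
  fixes sE :: "'k::{real_normed_field,banach} \<Rightarrow> 'e::banach \<Rightarrow> 'e"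
    and sF :: "'k \<Rightarrow> 'f::banach \<Rightarrow> 'f"
    and m :: nat
    and P :: "'e \<Rightarrow> 'f"
  assumes "kbanach sE" and "kbanach sF"
    and "P \<in> hompoly sE sF m"
    and "finite_rank sF P"
  shows "\<forall>k n. finite_type (hompoly sF (*) k) (fun_scale (*)) polynorm
                 (fun_scale (*)) (hompoly sE (*) (m * n * k)) n (Delta n P)"
proof (intro allI)
  fix k n :: nat
  note vE = kbanach_vector_space[OF assms(1)] and vF = kbanach_vector_space[OF assms(2)]
  let ?X = "hompoly sF ((*) :: 'k \<Rightarrow> _) k"
  define T where "T = (\<lambda>x q. (if q \<in> ?X then q (P x) else 0) ^ n)"
  have "\<exists>S. finite S \<and> range T \<subseteq> fspace.span S"
    unfolding T_def
    by (rule finite_rank_evaluation_powers_finite_span[OF vF assms(4)])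
  then obtain S where S: "finite S" "range T \<subseteq> fspace.span S"
    by (elim exE conjE) (rule that)
  obtain r :: nat and xs L where L: "\<forall>i<r. L i \<in> point_eval_span"
    and interpolation: "\<forall>x q. T x q = (\<Sum>i<r. L i (T x) * T (xs i) q)"
    using finite_span_family_interpolation[OF S] by (elim exE conjE) (rule that)
  show "finite_type ?X (fun_scale (*)) polynorm (fun_scale (*)) (hompoly sE (*) (m * n * k))
      n (Delta n P)"
    unfolding finite_type_def
  proof (intro exI[of _ r] exI[of _ "\<lambda>i q. q (P (xs i))"] exI[of _ "\<lambda>i x. L i (T x)"]
      conjI allI impI ballI)
    fix i assume "i < r"
    show "dual_on ?X (fun_scale (*)) polynorm (\<lambda>q. q (P (xs i)))"
      by (rule dual_on_evaluation[OF kbanach_scale_of_real[OF assms(2)]])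
    from L \<open>i < r\<close> have "L i \<in> point_eval_span" by blast
    then show "(\<lambda>x. L i (T x)) \<in> hompoly sE (*) (m * n * k)"
      by (rule point_eval_span_comp[OF _ subspace_hompoly[OF vE]])
        (simp add: T_def hompoly_restricted_evaluation_power[OF vE assms(3)])
  next
    fix q assume "q \<in> ?X"
    then have "Delta n P q x = (\<Sum>i<r. L i (T x) * q (P (xs i)) ^ n)" for x
      using interpolation[rule_format, of x q] by (simp add: Delta_def T_def)
    then show "Delta n P q = (\<Sum>i<r. fun_scale (*) (q (P (xs i)) ^ n) (\<lambda>x. L i (T x)))"
      by (simp add: fun_eq_iff sum_fun_apply fun_scale_def mult.commute)
  qed
qed

end
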